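(* The $SEP$ composition $\mathbb{C}^2\otimes_{\min}\mathbb{C}^2$ exhibits dimension mismatch: its information dimension is strictly greater than $4$, whereas its operational (measurement) dimension equals $4$.
   Context: In $\mathbb{C}^2\otimes_{\min}\mathbb{C}^2$ (the $SEP$ composition of two qubits), states are the separable density operators on $\mathbb{C}^2\otimes\mathbb{C}^2$ and a measurement is a finite family of Hermitian operators $\{E_i\}$, each with $\operatorname{Tr}(E_iX)\ge0$ for every separable positive operator $X$, summing to the identity. The operational (measurement) dimension of a system is the maximal cardinality of a set of states perfectly distinguishable by a single measurement (i.e. a measurement $\{E_i\}$ with $\operatorname{Tr}(E_i\omega_j)=\delta_{ij}$). The information dimension is the maximal cardinality of a set of states that is pairwise distinguishable, i.e. for each pair $i\neq j$ there is some two-outcome measurement $\{E,\mathbf1-E\}$ with $\operatorname{Tr}(E\omega_i)=1$, $\operatorname{Tr}(E\omega_j)=0$. Dimension mismatch means the information dimension differs from the operational dimension. *)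

theory Defs
  imports "HOL-Analysis.Analysis" "HOL-Library.Extended_Nat"
begin

text \<open>Operators on one qubit: 2x2 complex matrices; operators on
  C^2 (x) C^2: matrices indexed by the product type 2 x 2 (a 4-dim space).\<close>

type_synonym qop = "complex ^ 2 ^ 2"
type_synonym op2 = "complex ^ (2 \<times> 2) ^ (2 \<times> 2)"

definition mtrace :: "complex ^ 'n ^ 'n \<Rightarrow> complex" where
  "mtrace A = (\<Sum>i\<in>UNIV. A $ i $ i)"

definition adjoint_m :: "complex ^ 'n ^ 'n \<Rightarrow> complex ^ 'n ^ 'n" where
  "adjoint_m A = (\<chi> i j. cnj (A $ j $ i))"

definition hermitian :: "complex ^ 'n ^ 'n \<Rightarrow> bool" where
  "hermitian A \<longleftrightarrow> adjoint_m A = A"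

definition nonneg_c :: "complex \<Rightarrow> bool" where
  "nonneg_c z \<longleftrightarrow> Im z = 0 \<and> 0 \<le> Re z"

definition psd :: "complex ^ 'n ^ 'n \<Rightarrow> bool" where
  "psd A \<longleftrightarrow> hermitian A \<and>
     (\<forall>v :: complex ^ 'n. nonneg_c (\<Sum>i\<in>UNIV. \<Sum>j\<in>UNIV. cnj (v $ i) * A $ i $ j * v $ j))"

definition kron :: "qop \<Rightarrow> qop \<Rightarrow> op2" where
  "kron A B = (\<chi> p q. A $ fst p $ fst q * B $ snd p $ snd q)"

definition sep_pos :: "op2 \<Rightarrow> bool" where
  "sep_pos X \<longleftrightarrow> (\<exists>(n::nat) A B. (\<forall>i<n. psd (A i) \<and> psd (B i)) \<and>
                       X = (\<Sum>i<n. kron (A i) (B i)))"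

definition sep_state :: "op2 \<Rightarrow> bool" where
  "sep_state \<omega> \<longleftrightarrow> sep_pos \<omega> \<and> mtrace \<omega> = 1"

definition sep_effect :: "op2 \<Rightarrow> bool" where
  "sep_effect E \<longleftrightarrow> hermitian E \<and> (\<forall>X. sep_pos X \<longrightarrow> nonneg_c (mtrace (E ** X)))"

definition sep_measurement :: "nat \<Rightarrow> (nat \<Rightarrow> op2) \<Rightarrow> bool" where
  "sep_measurement n E \<longleftrightarrow> (\<forall>i<n. sep_effect (E i)) \<and> (\<Sum>i<n. E i) = mat 1"

definition perfectly_distinguishable :: "nat \<Rightarrow> (nat \<Rightarrow> op2) \<Rightarrow> bool" where
  "perfectly_distinguishable k \<omega> \<longleftrightarrow> (\<forall>i<k. sep_state (\<omega> i)) \<and>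
     (\<exists>E. sep_measurement k E \<and>
          (\<forall>i<k. \<forall>j<k. mtrace (E i ** \<omega> j) = (if i = j then 1 else 0)))"

definition pairwise_distinguishable :: "nat \<Rightarrow> (nat \<Rightarrow> op2) \<Rightarrow> bool" where
  "pairwise_distinguishable k \<omega> \<longleftrightarrow> (\<forall>i<k. sep_state (\<omega> i)) \<and>
     (\<forall>i<k. \<forall>j<k. i \<noteq> j \<longrightarrow>
        (\<exists>E. sep_measurement 2 (\<lambda>t. if t = 0 then E else mat 1 - E) \<and>
             mtrace (E ** \<omega> i) = 1 \<and> mtrace (E ** \<omega> j) = 0))"

definition operational_dim :: enat where
  "operational_dim = Sup {enat k | k. \<exists>\<omega>. perfectly_distinguishable k \<omega>}"

definition information_dim :: enat where
  "information_dim = Sup {enat k | k. \<exists>\<omega>. pairwise_distinguishable k \<omega>}"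

end

theory Submission
  imports Defs
begin

(*
  Upper bound on the operational dimension: if an effect E detects a separable state \<omega> with
  certainty, then tr E \<ge> 1, because 1 - \<omega> is again separable.  For positive A, B with
  tr A tr B = 1 one has 1 - A \<otimes> B = adj A \<otimes> (tr B) 1 + A \<otimes> adj B, where the adjugate
  adj A = (tr A) 1 - A of a positive 2x2 matrix is positive.  The effects of a measurement sum to
  the identity, whose trace is 4, so at most four states are perfectly distinguishable; the
  product basis attains four.

  Lower bound on the information dimension: for a unitary U let E_U be the partial transpose of
  the projector onto the vector with entries U_ab.  Then tr (E_U (A \<otimes> B)) = tr (A U B U\<^sup>\<dagger>), which
  lies between 0 and tr A tr B for positive A, B, so {E_U, 1 - E_U} is a measurement of the SEP
  composition although E_U is not positive.  With U the identity or a Pauli matrix, such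
  measurements separate every pair of the five product states |00>, |01>, |++>, |+->, |ii>.
*)

lemma mtrace_diff: "mtrace (A - B) = mtrace A - mtrace B"
  by (simp add: mtrace_def sum_subtractf)

lemma mtrace_sum: "mtrace (sum f S) = (\<Sum>s\<in>S. mtrace (f s))"
  unfolding mtrace_def by (simp add: sum_component) (rule sum.swap)

lemma mtrace_mat: "mtrace (mat c :: complex ^ 'n ^ 'n) = of_nat CARD('n) * c"
  by (simp add: mtrace_def mat_def)

lemma mtrace_matrix_mult: "mtrace (A ** B) = (\<Sum>i\<in>UNIV. \<Sum>k\<in>UNIV. A $ i $ k * B $ k $ i)"
  by (simp add: mtrace_def matrix_matrix_mult_def)

lemma mtrace_mult_commute: "mtrace (A ** B) = mtrace (B ** A)"
  unfolding mtrace_matrix_mult by (subst sum.swap) (simp add: mult.commute)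

lemma mtrace_mat_mult: "mtrace (mat c ** A) = c * mtrace A"
  by (simp add: mtrace_def matrix_matrix_mult_def mat_def if_distrib if_distribR sum_distrib_left cong: if_cong)

lemma matrix_mult_diff_left: "(A - B) ** C = A ** C - B ** (C :: 'a :: comm_ring_1 ^ _ ^ _)"
  by (simp add: matrix_matrix_mult_def vec_eq_iff left_diff_distrib sum_subtractf)

lemma matrix_mult_diff_right: "C ** (A - B) = C ** A - C ** (B :: 'a :: comm_ring_1 ^ _ ^ _)"
  by (simp add: matrix_matrix_mult_def vec_eq_iff right_diff_distrib sum_subtractf)

lemma matrix_mult_sum_right: "C ** sum f S = (\<Sum>s\<in>S. C ** f s)"
  by (induction S rule: infinite_finite_induct) (simp_all add: matrix_add_ldistrib)

lemma adjoint_m_adjoint_m: "adjoint_m (adjoint_m A) = A"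
  by (simp add: adjoint_m_def vec_eq_iff)

lemma adjoint_m_mult: "adjoint_m (A ** B) = adjoint_m B ** adjoint_m A"
  by (simp add: adjoint_m_def matrix_matrix_mult_def vec_eq_iff mult.commute)

lemma hermitian_mat_1: "hermitian (mat 1)"
  by (simp add: hermitian_def adjoint_m_def mat_def vec_eq_iff)

lemma hermitian_diff: "hermitian A \<Longrightarrow> hermitian B \<Longrightarrow> hermitian (A - B)"
  by (simp add: hermitian_def adjoint_m_def vec_eq_iff)

lemma nonneg_c_of_real [simp]: "nonneg_c (of_real r) \<longleftrightarrow> 0 \<le> r"
  by (simp add: nonneg_c_def)

lemma nonneg_c_add: "nonneg_c a \<Longrightarrow> nonneg_c b \<Longrightarrow> nonneg_c (a + b)"
  by (simp add: nonneg_c_def)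

lemma nonneg_c_mult: "nonneg_c a \<Longrightarrow> nonneg_c b \<Longrightarrow> nonneg_c (a * b)"
  by (simp add: nonneg_c_def)

lemma nonneg_c_sum: "(\<And>i. i \<in> S \<Longrightarrow> nonneg_c (f i)) \<Longrightarrow> nonneg_c (sum f S)"
  by (induction S rule: infinite_finite_induct) (auto intro: nonneg_c_add simp: nonneg_c_def)

lemma qform_eq_inner:
  "(\<Sum>i\<in>UNIV. \<Sum>j\<in>UNIV. cnj (v $ i) * A $ i $ j * v $ j) = (\<Sum>i\<in>UNIV. cnj (v $ i) * (A *v v) $ i)"
  by (simp add: matrix_vector_mult_def sum_distrib_left mult.assoc)

lemma inner_adjoint_m:
  "(\<Sum>i\<in>UNIV. cnj (v $ i) * (M *v w) $ i) = (\<Sum>k\<in>UNIV. cnj ((adjoint_m M *v v) $ k) * w $ k)"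
proof -
  have "(\<Sum>i\<in>UNIV. cnj (v $ i) * (M *v w) $ i) = (\<Sum>i\<in>UNIV. \<Sum>k\<in>UNIV. cnj (v $ i) * M $ i $ k * w $ k)"
    by (simp add: matrix_vector_mult_def sum_distrib_left mult.assoc)
  also have "\<dots> = (\<Sum>k\<in>UNIV. \<Sum>i\<in>UNIV. cnj (v $ i) * M $ i $ k * w $ k)"
    by (rule sum.swap)
  also have "\<dots> = (\<Sum>k\<in>UNIV. cnj ((adjoint_m M *v v) $ k) * w $ k)"
    by (simp add: matrix_vector_mult_def adjoint_m_def sum_distrib_left mult_ac)
  finally show ?thesis .
qed

lemma psd_congruence:
  assumes "psd B"
  shows "psd (M ** B ** adjoint_m M)"
  unfolding psd_def
proof
  show "hermitian (M ** B ** adjoint_m M)"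
    using assms unfolding psd_def hermitian_def
    by (simp add: adjoint_m_mult adjoint_m_adjoint_m matrix_mul_assoc)
  show "\<forall>v. nonneg_c (\<Sum>i\<in>UNIV. \<Sum>j\<in>UNIV. cnj (v $ i) * (M ** B ** adjoint_m M) $ i $ j * v $ j)"
  proof
    fix v :: "complex ^ 'a"
    let ?w = "adjoint_m M *v v"
    have "(M ** B ** adjoint_m M) *v v = M *v (B *v ?w)"
      by (simp add: matrix_vector_mul_assoc matrix_mul_assoc)
    then have "(\<Sum>i\<in>UNIV. \<Sum>j\<in>UNIV. cnj (v $ i) * (M ** B ** adjoint_m M) $ i $ j * v $ j)
      = (\<Sum>k\<in>UNIV. \<Sum>l\<in>UNIV. cnj (?w $ k) * B $ k $ l * ?w $ l)"
      by (simp only: qform_eq_inner inner_adjoint_m)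
    with assms show "nonneg_c (\<Sum>i\<in>UNIV. \<Sum>j\<in>UNIV. cnj (v $ i) * (M ** B ** adjoint_m M) $ i $ j * v $ j)"
      unfolding psd_def by simp
  qed
qed

lemma UNIV_2x2: "(UNIV :: (2 \<times> 2) set) = {(1,1), (1,2), (2,1), (2,2)}"
  using exhaust_2 by auto

lemma sum_2x2: "sum f (UNIV :: (2 \<times> 2) set) = f (1,1) + f (1,2) + f (2,1) + f (2,2)"
  unfolding UNIV_2x2 by (simp add: add.assoc)

lemma forall_2x2: "(\<forall>p :: 2 \<times> 2. P p) \<longleftrightarrow> P (1,1) \<and> P (1,2) \<and> P (2,1) \<and> P (2,2)"
  using UNIV_2x2 by (metis UNIV_I insertCI insertE empty_iff)

definition mat2 :: "complex \<Rightarrow> complex \<Rightarrow> complex \<Rightarrow> complex \<Rightarrow> qop" where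
  "mat2 a b c d = vector [vector [a, b], vector [c, d]]"

lemma mat2_nth [simp]:
  "mat2 a b c d $ 1 $ 1 = a" "mat2 a b c d $ 1 $ 2 = b"
  "mat2 a b c d $ 2 $ 1 = c" "mat2 a b c d $ 2 $ 2 = d"
  by (simp_all add: mat2_def vector_2)

lemma qop_eq_iff: "(A :: qop) = B \<longleftrightarrow>
    A $ 1 $ 1 = B $ 1 $ 1 \<and> A $ 1 $ 2 = B $ 1 $ 2 \<and> A $ 2 $ 1 = B $ 2 $ 1 \<and> A $ 2 $ 2 = B $ 2 $ 2"
  by (auto simp: vec_eq_iff forall_2)

lemma mtrace_qop: "mtrace (A :: qop) = A $ 1 $ 1 + A $ 2 $ 2"
  by (simp add: mtrace_def sum_2)

lemma mat2_mult [simp]: "mat2 a b c d ** mat2 a' b' c' d' =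
    mat2 (a * a' + b * c') (a * b' + b * d') (c * a' + d * c') (c * b' + d * d')"
  by (simp add: qop_eq_iff matrix_matrix_mult_def sum_2)

lemma adjoint_m_mat2 [simp]: "adjoint_m (mat2 a b c d) = mat2 (cnj a) (cnj c) (cnj b) (cnj d)"
  by (simp add: qop_eq_iff adjoint_m_def)

lemma mtrace_mat2 [simp]: "mtrace (mat2 a b c d) = a + d"
  by (simp add: mtrace_qop)

lemma mat_qop: "(mat c :: qop) = mat2 c 0 0 c"
  by (simp add: qop_eq_iff mat_def)

lemma hermitian_qop_iff: "hermitian (A :: qop) \<longleftrightarrow>
    A $ 1 $ 1 = of_real (Re (A $ 1 $ 1)) \<and> A $ 2 $ 2 = of_real (Re (A $ 2 $ 2)) \<and> A $ 2 $ 1 = cnj (A $ 1 $ 2)"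
  unfolding hermitian_def adjoint_m_def vec_eq_iff forall_2
  by (auto simp: complex_eq_iff)

lemma hermitian_qopE:
  assumes "hermitian (A :: qop)"
  obtains a b c where "A = mat2 (of_real a) c (cnj c) (of_real b)"
  using assms unfolding hermitian_qop_iff qop_eq_iff by (metis mat2_nth)

lemma cmod_mult_self: "cmod z * cmod z = Re z * Re z + Im z * Im z"
  by (metis cmod_power2 power2_eq_square)

lemma forall_vector_2: "(\<forall>v :: 'a :: zero ^ 2. P (v $ 1) (v $ 2)) \<longleftrightarrow> (\<forall>x y. P x y)"
  by (metis vector_2)

lemma qform_hermitian_mat2:
  "(\<Sum>i\<in>UNIV. \<Sum>j\<in>UNIV. cnj (v $ i) * mat2 (of_real a) c (cnj c) (of_real b) $ i $ j * v $ j)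
    = of_real (a * (cmod (v $ 1))\<^sup>2 + b * (cmod (v $ 2))\<^sup>2 + 2 * Re (cnj (v $ 1) * c * v $ 2))"
  by (simp add: sum_2 complex_eq_iff power2_eq_square cmod_mult_self algebra_simps)

text \<open>Two-variable AM-GM: \<open>2 \<bar>Re z\<bar> \<le> 2 \<surd>(P Q) \<le> P + Q\<close>.\<close>
lemma nonneg_add_twice_Re:
  fixes P Q :: real
  assumes "0 \<le> P" "0 \<le> Q" "(cmod z)\<^sup>2 \<le> P * Q"
  shows "0 \<le> P + Q + 2 * Re z"
proof -
  have "(2 * \<bar>Re z\<bar>)\<^sup>2 = 4 * (Re z)\<^sup>2"
    by (simp add: power_mult_distrib)
  also have "\<dots> \<le> 4 * (P * Q)"
    using power_mono[OF abs_Re_le_cmod[of z], of 2] assms(3) by simp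
  also have "\<dots> \<le> (P + Q)\<^sup>2"
    using sum_squares_ge_zero[of "P - Q" 0] by (simp add: power2_eq_square algebra_simps)
  finally have "2 * \<bar>Re z\<bar> \<le> P + Q"
    by (rule power2_le_imp_le) (use assms(1,2) in linarith)
  then show ?thesis
    by linarith
qed

lemma hermitian_form_nonneg_if:
  fixes a b :: real
  assumes "0 \<le> a" "0 \<le> b" "(cmod c)\<^sup>2 \<le> a * b"
  shows "0 \<le> a * (cmod x)\<^sup>2 + b * (cmod y)\<^sup>2 + 2 * Re (cnj x * c * y)"
proof (rule nonneg_add_twice_Re)
  have "(cmod (cnj x * c * y))\<^sup>2 = (cmod x)\<^sup>2 * (cmod y)\<^sup>2 * (cmod c)\<^sup>2"
    by (simp add: norm_mult power_mult_distrib)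
  also have "\<dots> \<le> (cmod x)\<^sup>2 * (cmod y)\<^sup>2 * (a * b)"
    using assms(3) by (intro mult_left_mono) auto
  finally show "(cmod (cnj x * c * y))\<^sup>2 \<le> a * (cmod x)\<^sup>2 * (b * (cmod y)\<^sup>2)"
    by (simp add: algebra_simps)
qed (use assms in auto)

lemma hermitian_form_nonneg_imp:
  fixes a b :: real
  assumes form: "\<And>x y. 0 \<le> a * (cmod x)\<^sup>2 + b * (cmod y)\<^sup>2 + 2 * Re (cnj x * c * y)"
  shows "0 \<le> a" "0 \<le> b" "(cmod c)\<^sup>2 \<le> a * b"
proof -
  show a: "0 \<le> a" and b: "0 \<le> b"
    using form[of 1 0] form[of 0 1] by simp_all
  consider "a > 0" | "a = 0" "b > 0" | "a = 0" "b = 0"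
    using a b by linarith
  then show "(cmod c)\<^sup>2 \<le> a * b"
  proof cases
    case 1
    have "0 \<le> a * (a * b - (cmod c)\<^sup>2)"
      using form[of "- c" "of_real a"] by (simp add: algebra_simps power2_eq_square cmod_mult_self)
    with 1 show ?thesis by (simp add: zero_le_mult_iff)
  next
    case 2
    have "0 \<le> b * (a * b - (cmod c)\<^sup>2)"
      using form[of "of_real b" "- cnj c"] by (simp add: algebra_simps power2_eq_square cmod_mult_self)
    with 2 show ?thesis by (simp add: zero_le_mult_iff mult_le_0_iff)
  next
    case 3
    then show ?thesis
      using form[of "- c" 1] by (simp add: power2_eq_square cmod_mult_self)
  qed
qed

lemma psd_qop_iff: "psd (A :: qop) \<longleftrightarrow> hermitian A \<and>
    0 \<le> Re (A $ 1 $ 1) \<and> 0 \<le> Re (A $ 2 $ 2) \<and> (cmod (A $ 1 $ 2))\<^sup>2 \<le> Re (A $ 1 $ 1) * Re (A $ 2 $ 2)"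
proof (cases "hermitian A")
  case True
  then obtain a b c where A: "A = mat2 (of_real a) c (cnj c) (of_real b)"
    by (rule hermitian_qopE)
  have "psd A \<longleftrightarrow> (\<forall>x y. 0 \<le> a * (cmod x)\<^sup>2 + b * (cmod y)\<^sup>2 + 2 * Re (cnj x * c * y))"
    using True forall_vector_2[of "\<lambda>x y. 0 \<le> a * (cmod x)\<^sup>2 + b * (cmod y)\<^sup>2 + 2 * Re (cnj x * c * y)"]
    unfolding psd_def A qform_hermitian_mat2 nonneg_c_of_real by simp
  also have "\<dots> \<longleftrightarrow> 0 \<le> a \<and> 0 \<le> b \<and> (cmod c)\<^sup>2 \<le> a * b"
    by (meson hermitian_form_nonneg_if hermitian_form_nonneg_imp)
  finally show ?thesis
    using True unfolding A by simp
qed (simp add: psd_def)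

lemma psd_mtrace_mult_nonneg:
  assumes "psd (A :: qop)" "psd C"
  shows "nonneg_c (mtrace (A ** C))"
proof -
  obtain a1 a2 \<alpha> where A: "A = mat2 (of_real a1) \<alpha> (cnj \<alpha>) (of_real a2)"
    using assms(1) hermitian_qopE psd_def by blast
  obtain c1 c2 \<gamma> where C: "C = mat2 (of_real c1) \<gamma> (cnj \<gamma>) (of_real c2)"
    using assms(2) hermitian_qopE psd_def by blast
  have A_pos: "0 \<le> a1" "0 \<le> a2" "(cmod \<alpha>)\<^sup>2 \<le> a1 * a2"
    and C_pos: "0 \<le> c1" "0 \<le> c2" "(cmod \<gamma>)\<^sup>2 \<le> c1 * c2"
    using assms unfolding A C psd_qop_iff by simp_all
  have "(cmod (\<alpha> * cnj \<gamma>))\<^sup>2 = (cmod \<alpha>)\<^sup>2 * (cmod \<gamma>)\<^sup>2"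
    by (simp add: norm_mult power_mult_distrib)
  also have "\<dots> \<le> (a1 * c1) * (a2 * c2)"
    using A_pos C_pos mult_mono[OF A_pos(3) C_pos(3)] by (simp add: algebra_simps)
  finally have "0 \<le> a1 * c1 + a2 * c2 + 2 * Re (\<alpha> * cnj \<gamma>)"
    using A_pos C_pos by (intro nonneg_add_twice_Re) auto
  moreover have "mtrace (A ** C) = of_real (a1 * c1 + a2 * c2 + 2 * Re (\<alpha> * cnj \<gamma>))"
    unfolding A C by (simp add: complex_eq_iff)
  ultimately show ?thesis
    by (simp only: nonneg_c_of_real)
qed

definition adjugate2 :: "qop \<Rightarrow> qop" where
  "adjugate2 A = mat (mtrace A) - A"

lemma psd_adjugate2: "psd A \<Longrightarrow> psd (adjugate2 A)"
  by (simp add: psd_qop_iff hermitian_qop_iff adjugate2_def mtrace_qop mat_qop mult.commute)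

lemma psd_mat_mtrace: "psd (A :: qop) \<Longrightarrow> psd (mat (mtrace A) :: qop)"
  by (simp add: psd_qop_iff hermitian_qop_iff mtrace_qop mat_qop)

lemma mtrace_mult_le_mtrace_mtrace:
  assumes "psd (A :: qop)" "psd C"
  shows "nonneg_c (mtrace A * mtrace C - mtrace (A ** C))"
proof -
  have "mtrace (adjugate2 A ** C) = mtrace A * mtrace C - mtrace (A ** C)"
    by (simp add: adjugate2_def matrix_mult_diff_left mtrace_diff mtrace_mat_mult)
  then show ?thesis
    using psd_mtrace_mult_nonneg[OF psd_adjugate2[OF assms(1)] assms(2)] by simp
qed

section \<open>The separable cone\<close>

lemma mtrace_kron: "mtrace (kron A B) = mtrace A * mtrace B"
  by (simp add: mtrace_def sum_2x2 sum_2 kron_def algebra_simps)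

lemma mtrace_kron_mult: "mtrace (kron P Q ** kron A B) = mtrace (P ** A) * mtrace (Q ** B)"
  by (simp add: mtrace_matrix_mult sum_2x2 sum_2 kron_def algebra_simps)

lemma hermitian_kron: "hermitian A \<Longrightarrow> hermitian B \<Longrightarrow> hermitian (kron A B)"
  unfolding hermitian_def adjoint_m_def kron_def by (simp add: vec_eq_iff)

lemma sep_pos_0: "sep_pos 0"
  unfolding sep_pos_def by (rule exI[of _ 0]) simp

lemma sep_pos_kron: "psd A \<Longrightarrow> psd B \<Longrightarrow> sep_pos (kron A B)"
  unfolding sep_pos_def by (rule exI[of _ 1], rule exI[of _ "\<lambda>_. A"], rule exI[of _ "\<lambda>_. B"]) simp

lemma sep_pos_add:
  assumes "sep_pos X" "sep_pos Y"
  shows "sep_pos (X + Y)"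
proof -
  obtain n :: nat and A B where AB: "\<forall>i<n. psd (A i) \<and> psd (B i)" "X = (\<Sum>i<n. kron (A i) (B i))"
    using assms(1) unfolding sep_pos_def by blast
  obtain m :: nat and C D where CD: "\<forall>i<m. psd (C i) \<and> psd (D i)" "Y = (\<Sum>i<m. kron (C i) (D i))"
    using assms(2) unfolding sep_pos_def by blast
  define A' where "A' i = (if i < n then A i else C (i - n))" for i
  define B' where "B' i = (if i < n then B i else D (i - n))" for i
  have "(\<Sum>i<n + m. kron (A' i) (B' i)) = (\<Sum>i<n. kron (A' i) (B' i)) + (\<Sum>i<m. kron (A' (n + i)) (B' (n + i)))"
  proof -
    have "(\<Sum>i<n + m. kron (A' i) (B' i))
        = (\<Sum>i\<in>{0..<n}. kron (A' i) (B' i)) + (\<Sum>i\<in>{n..<n + m}. kron (A' i) (B' i))"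
      by (simp add: lessThan_atLeast0 sum.atLeastLessThan_concat)
    also have "(\<Sum>i\<in>{n..<n + m}. kron (A' i) (B' i)) = (\<Sum>i\<in>{0..<m}. kron (A' (n + i)) (B' (n + i)))"
      using sum.shift_bounds_nat_ivl[of "\<lambda>i. kron (A' i) (B' i)" 0 n m] by (simp add: add.commute)
    finally show ?thesis
      by (simp add: lessThan_atLeast0)
  qed
  also have "\<dots> = X + Y"
    using AB CD by (simp add: A'_def B'_def)
  finally have "X + Y = (\<Sum>i<n + m. kron (A' i) (B' i))"
    by simp
  moreover have "\<forall>i<n + m. psd (A' i) \<and> psd (B' i)"
    using AB CD by (auto simp: A'_def B'_def)
  ultimately show ?thesis
    unfolding sep_pos_def by blast
qed

lemma sep_pos_sum: "finite S \<Longrightarrow> (\<And>i. i \<in> S \<Longrightarrow> sep_pos (f i)) \<Longrightarrow> sep_pos (sum f S)"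
  by (induction S rule: finite_induct) (auto intro: sep_pos_add sep_pos_0)

lemma sep_effect_intro:
  assumes "hermitian E" "\<And>A B. psd A \<Longrightarrow> psd B \<Longrightarrow> nonneg_c (mtrace (E ** kron A B))"
  shows "sep_effect E"
  unfolding sep_effect_def
proof (intro conjI allI impI assms(1))
  fix X assume "sep_pos X"
  then obtain n :: nat and A B where AB: "\<forall>i<n. psd (A i) \<and> psd (B i)" "X = (\<Sum>i<n. kron (A i) (B i))"
    unfolding sep_pos_def by blast
  show "nonneg_c (mtrace (E ** X))"
    unfolding AB(2) matrix_mult_sum_right mtrace_sum using AB(1) assms(2) by (intro nonneg_c_sum) auto
qed

lemma sep_effect_kron:
  assumes "psd P" "psd Q"
  shows "sep_effect (kron P Q)"
proof (rule sep_effect_intro)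
  show "hermitian (kron P Q)"
    using assms by (simp add: psd_def hermitian_kron)
  show "nonneg_c (mtrace (kron P Q ** kron A B))" if "psd A" "psd B" for A B
    unfolding mtrace_kron_mult using assms that by (intro nonneg_c_mult psd_mtrace_mult_nonneg)
qed

section \<open>Operational dimension\<close>

lemma kron_adjugate2_decomposition:
  "kron (adjugate2 A) (mat (mtrace B)) + kron A (adjugate2 B) = mat (mtrace A * mtrace B) - kron A B"
  unfolding vec_eq_iff forall_2x2 by (simp add: kron_def adjugate2_def mat_def mtrace_qop algebra_simps)

lemma sep_pos_mat_1_minus_state:
  assumes "sep_state \<omega>"
  shows "sep_pos (mat 1 - \<omega>)"
proof -
  obtain n :: nat and A B where AB: "\<forall>i<n. psd (A i) \<and> psd (B i)" "\<omega> = (\<Sum>i<n. kron (A i) (B i))"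
    using assms unfolding sep_state_def sep_pos_def by blast
  have "(\<Sum>i<n. mtrace (A i) * mtrace (B i)) = 1"
    using assms unfolding sep_state_def AB(2) by (simp add: mtrace_sum mtrace_kron)
  then have "mat 1 - \<omega> = (\<Sum>i<n. mat (mtrace (A i) * mtrace (B i)) - kron (A i) (B i))"
    unfolding AB(2) by (simp add: sum_subtractf vec_eq_iff mat_def sum.If_cases)
  also have "\<dots> = (\<Sum>i<n. kron (adjugate2 (A i)) (mat (mtrace (B i))) + kron (A i) (adjugate2 (B i)))"
    by (simp add: kron_adjugate2_decomposition)
  finally show ?thesis
    using AB(1) by (auto intro!: sep_pos_sum sep_pos_add sep_pos_kron psd_adjugate2 psd_mat_mtrace)
qed

lemma sep_effect_mtrace_ge_1:
  assumes "sep_effect E" "sep_state \<omega>" "mtrace (E ** \<omega>) = 1"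
  shows "1 \<le> Re (mtrace E)"
proof -
  have "nonneg_c (mtrace (E ** (mat 1 - \<omega>)))"
    using assms(1) sep_pos_mat_1_minus_state[OF assms(2)] unfolding sep_effect_def by blast
  then show ?thesis
    unfolding matrix_mult_diff_right mtrace_diff assms(3) by (simp add: nonneg_c_def)
qed

lemma perfectly_distinguishable_le_4:
  assumes "perfectly_distinguishable k \<omega>"
  shows "k \<le> 4"
proof -
  obtain E where E: "sep_measurement k E" "\<forall>i<k. \<forall>j<k. mtrace (E i ** \<omega> j) = (if i = j then 1 else 0)"
    using assms unfolding perfectly_distinguishable_def by blast
  have "real k = (\<Sum>i<k. 1)"
    by simp
  also have "\<dots> \<le> (\<Sum>i<k. Re (mtrace (E i)))"
    using E assms sep_effect_mtrace_ge_1
    unfolding sep_measurement_def perfectly_distinguishable_def by (intro sum_mono) auto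
  also have "\<dots> = Re (mtrace (\<Sum>i<k. E i))"
    by (simp add: mtrace_sum)
  also have "\<dots> = Re (mtrace (mat 1 :: op2))"
    using E(1) unfolding sep_measurement_def by simp
  also have "\<dots> = 4"
    by (simp add: mtrace_mat)
  finally show ?thesis
    by simp
qed

definition proj0 :: qop where "proj0 = mat2 1 0 0 0"
definition proj1 :: qop where "proj1 = mat2 0 0 0 1"

definition product_basis :: "nat \<Rightarrow> op2" where
  "product_basis = (!) [kron proj0 proj0, kron proj0 proj1, kron proj1 proj0, kron proj1 proj1]"

lemma psd_proj0: "psd proj0" and psd_proj1: "psd proj1"
  by (simp_all add: proj0_def proj1_def psd_qop_iff hermitian_qop_iff)

lemma all_less_4: "(\<forall>i < (4::nat). P i) \<longleftrightarrow> P 0 \<and> P 1 \<and> P 2 \<and> P 3"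
  by (auto simp: numeral_eq_Suc less_Suc_eq)

lemma sum_less_4: "(\<Sum>i < (4::nat). f i) = f 0 + f 1 + f 2 + f 3"
  by (simp add: numeral_eq_Suc add.commute add.left_commute)

lemma perfectly_distinguishable_product_basis: "perfectly_distinguishable 4 product_basis"
  unfolding perfectly_distinguishable_def
proof (intro conjI exI[of _ product_basis])
  show "\<forall>i<4. sep_state (product_basis i)"
    unfolding all_less_4 product_basis_def sep_state_def
    by (simp add: sep_pos_kron psd_proj0 psd_proj1 mtrace_kron) (simp add: proj0_def proj1_def)
  show "sep_measurement 4 product_basis"
    unfolding sep_measurement_def all_less_4 product_basis_def sum_less_4
    by (simp add: sep_effect_kron psd_proj0 psd_proj1)
       (simp add: vec_eq_iff forall_2 kron_def mat_def proj0_def proj1_def)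
  show "\<forall>i<4. \<forall>j<4. mtrace (product_basis i ** product_basis j) = (if i = j then 1 else 0)"
    unfolding all_less_4 product_basis_def by (simp add: mtrace_kron_mult proj0_def proj1_def)
qed

lemma operational_dim_eq_4: "operational_dim = 4"
  unfolding operational_dim_def
proof (rule Sup_eqI)
  show "y \<le> 4" if "y \<in> {enat k |k. \<exists>\<omega>. perfectly_distinguishable k \<omega>}" for y
    using that perfectly_distinguishable_le_4 by (auto simp: numeral_eq_enat)
  show "4 \<le> y" if "\<And>z. z \<in> {enat k |k. \<exists>\<omega>. perfectly_distinguishable k \<omega>} \<Longrightarrow> z \<le> y" for y
    using that[of 4] perfectly_distinguishable_product_basis by (auto simp: numeral_eq_enat)
qed

section \<open>Information dimension\<close>

definition partial_transpose :: "op2 \<Rightarrow> op2" where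
  "partial_transpose X = (\<chi> p q. X $ (fst p, snd q) $ (fst q, snd p))"

definition vec_proj :: "qop \<Rightarrow> op2" where
  "vec_proj U = (\<chi> p q. U $ fst p $ snd p * cnj (U $ fst q $ snd q))"

definition unitary :: "qop \<Rightarrow> bool" where
  "unitary U \<longleftrightarrow> adjoint_m U ** U = mat 1"

lemma hermitian_partial_transpose_vec_proj: "hermitian (partial_transpose (vec_proj U))"
  unfolding hermitian_def adjoint_m_def partial_transpose_def vec_proj_def
  by (simp add: vec_eq_iff mult.commute)

lemma mtrace_partial_transpose_vec_proj_kron:
  "mtrace (partial_transpose (vec_proj U) ** kron A B) = mtrace (A ** (U ** B ** adjoint_m U))"
  unfolding mtrace_matrix_mult
  by (simp add: matrix_matrix_mult_def sum_2x2 sum_2 partial_transpose_def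
      vec_proj_def kron_def adjoint_m_def algebra_simps)

lemma mtrace_unitary_congruence: "unitary U \<Longrightarrow> mtrace (U ** B ** adjoint_m U) = mtrace B"
  unfolding unitary_def by (metis matrix_mul_assoc matrix_mul_lid mtrace_mult_commute)

lemma sep_effect_partial_transpose_vec_proj:
  assumes "unitary U"
  shows "sep_effect (partial_transpose (vec_proj U))"
    and "sep_effect (mat 1 - partial_transpose (vec_proj U))"
proof -
  have conj_psd: "psd (U ** B ** adjoint_m U)" if "psd B" for B
    using that by (rule psd_congruence)
  show "sep_effect (partial_transpose (vec_proj U))"
    by (rule sep_effect_intro[OF hermitian_partial_transpose_vec_proj])
       (simp add: mtrace_partial_transpose_vec_proj_kron psd_mtrace_mult_nonneg conj_psd)
  show "sep_effect (mat 1 - partial_transpose (vec_proj U))"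
  proof (rule sep_effect_intro)
    show "hermitian (mat 1 - partial_transpose (vec_proj U))"
      by (intro hermitian_diff hermitian_mat_1 hermitian_partial_transpose_vec_proj)
    fix A B :: qop
    assume "psd A" "psd B"
    then have "nonneg_c (mtrace A * mtrace (U ** B ** adjoint_m U) - mtrace (A ** (U ** B ** adjoint_m U)))"
      by (intro mtrace_mult_le_mtrace_mtrace conj_psd)
    then show "nonneg_c (mtrace ((mat 1 - partial_transpose (vec_proj U)) ** kron A B))"
      by (simp add: matrix_mult_diff_left mtrace_diff mtrace_kron mtrace_partial_transpose_vec_proj_kron
          mtrace_unitary_congruence[OF assms])
  qed
qed

definition pauli_X :: qop where "pauli_X = mat2 0 1 1 0"
definition pauli_Y :: qop where "pauli_Y = mat2 0 (- \<i>) \<i> 0"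
definition pauli_Z :: qop where "pauli_Z = mat2 1 0 0 (- 1)"

lemma unitary_paulis: "unitary (mat 1)" "unitary pauli_X" "unitary pauli_Y" "unitary pauli_Z"
  by (simp_all add: unitary_def pauli_X_def pauli_Y_def pauli_Z_def mat_qop)

definition proj_plus :: qop where "proj_plus = mat2 (1/2) (1/2) (1/2) (1/2)"
definition proj_minus :: qop where "proj_minus = mat2 (1/2) (- 1/2) (- 1/2) (1/2)"
definition proj_plus_i :: qop where "proj_plus_i = mat2 (1/2) (- \<i>/2) (\<i>/2) (1/2)"

definition five_states :: "nat \<Rightarrow> op2" where
  "five_states = (!) [kron proj0 proj0, kron proj0 proj1, kron proj_plus proj_plus,
     kron proj_plus proj_minus, kron proj_plus_i proj_plus_i]"

lemma all_less_5: "(\<forall>i < (5::nat). P i) \<longleftrightarrow> P 0 \<and> P 1 \<and> P 2 \<and> P 3 \<and> P 4"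
  by (auto simp: numeral_eq_Suc less_Suc_eq)

lemma sep_state_five_states: "\<forall>i<5. sep_state (five_states i)"
proof -
  have "psd proj_plus" "psd proj_minus" "psd proj_plus_i"
    by (simp_all add: proj_plus_def proj_minus_def proj_plus_i_def psd_qop_iff hermitian_qop_iff
        norm_divide power2_eq_square)
  then show ?thesis
    unfolding all_less_5 five_states_def sep_state_def
    by (simp add: sep_pos_kron psd_proj0 psd_proj1 mtrace_kron)
       (simp add: proj0_def proj1_def proj_plus_def proj_minus_def proj_plus_i_def)
qed

lemma pauli_witnesses:
  "\<forall>i<5. \<forall>j<5. i < j \<longrightarrow> (\<exists>U \<in> {mat 1, pauli_X, pauli_Y, pauli_Z}.
     mtrace (partial_transpose (vec_proj U) ** five_states i) = 1 \<and>
     mtrace (partial_transpose (vec_proj U) ** five_states j) = 0)"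
  unfolding all_less_5 five_states_def
  by (simp add: mtrace_partial_transpose_vec_proj_kron mat_qop pauli_X_def pauli_Y_def pauli_Z_def
      proj0_def proj1_def proj_plus_def proj_minus_def proj_plus_i_def)

lemma sep_measurement_two_outcome:
  "sep_effect E \<Longrightarrow> sep_effect (mat 1 - E) \<Longrightarrow> sep_measurement 2 (\<lambda>t. if t = 0 then E else mat 1 - E)"
  by (simp add: sep_measurement_def numeral_eq_Suc less_Suc_eq)

lemma pairwise_distinguishable_if_ordered_tests:
  assumes states: "\<forall>i<k. sep_state (\<omega> i)"
    and tests: "\<forall>i<k. \<forall>j<k. i < j \<longrightarrow> (\<exists>E. sep_effect E \<and> sep_effect (mat 1 - E) \<and>
                  mtrace (E ** \<omega> i) = 1 \<and> mtrace (E ** \<omega> j) = 0)"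
  shows "pairwise_distinguishable k \<omega>"
  unfolding pairwise_distinguishable_def
proof (intro conjI allI impI)
  show "sep_state (\<omega> i)" if "i < k" for i
    using states that by blast
  fix i j assume ij: "i < k" "j < k" "i \<noteq> j"
  show "\<exists>E. sep_measurement 2 (\<lambda>t. if t = 0 then E else mat 1 - E) \<and>
            mtrace (E ** \<omega> i) = 1 \<and> mtrace (E ** \<omega> j) = 0"
  proof (cases "i < j")
    case True
    then show ?thesis
      using tests ij sep_measurement_two_outcome by blast
  next
    case False
    then obtain E where E: "sep_effect E" "sep_effect (mat 1 - E)"
      "mtrace (E ** \<omega> j) = 1" "mtrace (E ** \<omega> i) = 0"
      using tests ij by (meson linorder_neqE_nat)
    have "mtrace ((mat 1 - E) ** \<omega> i) = 1" "mtrace ((mat 1 - E) ** \<omega> j) = 0"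
      using states ij E(3,4) by (simp_all add: matrix_mult_diff_left mtrace_diff sep_state_def)
    moreover have "sep_measurement 2 (\<lambda>t. if t = 0 then mat 1 - E else mat 1 - (mat 1 - E))"
      using E(1,2) by (intro sep_measurement_two_outcome) simp_all
    ultimately show ?thesis
      by blast
  qed
qed

lemma pairwise_distinguishable_five_states: "pairwise_distinguishable 5 five_states"
proof (rule pairwise_distinguishable_if_ordered_tests[OF sep_state_five_states])
  have "sep_effect (partial_transpose (vec_proj U)) \<and> sep_effect (mat 1 - partial_transpose (vec_proj U))"
    if "U \<in> {mat 1, pauli_X, pauli_Y, pauli_Z}" for U
    using that unitary_paulis sep_effect_partial_transpose_vec_proj by blast
  then show "\<forall>i<5. \<forall>j<5. i < j \<longrightarrow> (\<exists>E. sep_effect E \<and> sep_effect (mat 1 - E) \<and>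
      mtrace (E ** five_states i) = 1 \<and> mtrace (E ** five_states j) = 0)"
    using pauli_witnesses by meson
qed

lemma information_dim_gt_4: "information_dim > 4"
proof -
  have "(4 :: enat) < enat 5"
    by (simp add: numeral_eq_enat)
  also have "enat 5 \<le> information_dim"
    unfolding information_dim_def using pairwise_distinguishable_five_states by (blast intro: Sup_upper)
  finally show ?thesis .
qed

theorem corollary1:
  shows "information_dim > 4 \<and> operational_dim = 4"
  using information_dim_gt_4 operational_dim_eq_4 by blast

end
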